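(* Let $\mathcal G$ be an étale groupoid, $A$ a right $\mathcal G$-space and $B$ a left $\mathcal G$-space. If the $\mathcal G$-action on $A$ is proper and $B$ is Hausdorff, then the diagonal $\mathcal G$-action on $A\times_{s,\mathcal G^0,r}B$ defined by $g\cdot(a,b)=(a\cdot g^{-1},g\cdot b)$ (for $s(g)=s(a)=r(b)$) is proper.
   Context: An étale groupoid: topologies on arrow space $\mathcal G$ and object space $\mathcal G^0$ with $r,s$ local homeomorphisms and continuous multiplication and inversion. A right $\mathcal G$-space: space with continuous anchor $s$ and continuous action $(x,g)\mapsto xg$ defined when $s(x)=r(g)$, with $s(xg)=s(g)$, $(xg_1)g_2=x(g_1g_2)$, $x\,s(x)=x$; left spaces analogously with anchor $r$. A continuous map $f$ is proper if $f\times\mathrm{id}_Z$ is closed for every topological space $Z$. A right action on $A$ is proper if $A\times_{s,\mathcal G^0,r}\mathcal G\to A\times A$, $(a,g)\mapsto(ag,a)$, is proper; the diagonal (left) action on $W=A\times_{s,\mathcal G^0,r}B$, with anchor $(a,b)\mapsto s(a)=r(b)$, is proper if $\{(g,w)\in\mathcal G\times W: s(g)=\text{anchor}(w)\}\to W\times W$, $(g,w)\mapsto(g\cdot w,w)$, is proper. *)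

theory Defs
  imports "HOL-Analysis.Analysis"
begin

definition local_homeomorphism_map :: "'a topology \<Rightarrow> 'b topology \<Rightarrow> ('a \<Rightarrow> 'b) \<Rightarrow> bool" where
  "local_homeomorphism_map X Y f \<longleftrightarrow>
     continuous_map X Y f \<and>
     (\<forall>x\<in>topspace X. \<exists>V. openin X V \<and> x \<in> V \<and> openin Y (f ` V) \<and>
        homeomorphic_map (subtopology X V) (subtopology Y (f ` V)) f)"

definition groupoid :: "'g topology \<Rightarrow> 'g set \<Rightarrow> ('g \<Rightarrow> 'g) \<Rightarrow> ('g \<Rightarrow> 'g)
    \<Rightarrow> ('g \<Rightarrow> 'g \<Rightarrow> 'g) \<Rightarrow> ('g \<Rightarrow> 'g) \<Rightarrow> bool" where
  "groupoid T G0 r s m i \<longleftrightarrow>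
     G0 \<subseteq> topspace T \<and>
     (\<forall>u\<in>G0. r u = u \<and> s u = u) \<and>
     (\<forall>g\<in>topspace T. r g \<in> G0 \<and> s g \<in> G0 \<and> i g \<in> topspace T \<and>
        r (i g) = s g \<and> s (i g) = r g \<and>
        m g (i g) = r g \<and> m (i g) g = s g \<and> m (r g) g = g \<and> m g (s g) = g) \<and>
     (\<forall>g\<in>topspace T. \<forall>h\<in>topspace T. s g = r h \<longrightarrow>
        m g h \<in> topspace T \<and> r (m g h) = r g \<and> s (m g h) = s h) \<and>
     (\<forall>g\<in>topspace T. \<forall>h\<in>topspace T. \<forall>k\<in>topspace T. s g = r h \<longrightarrow> s h = r k \<longrightarrow>
        m (m g h) k = m g (m h k))"

definition etale_groupoid :: "'g topology \<Rightarrow> 'g set \<Rightarrow> ('g \<Rightarrow> 'g) \<Rightarrow> ('g \<Rightarrow> 'g)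
    \<Rightarrow> ('g \<Rightarrow> 'g \<Rightarrow> 'g) \<Rightarrow> ('g \<Rightarrow> 'g) \<Rightarrow> bool" where
  "etale_groupoid T G0 r s m i \<longleftrightarrow>
     groupoid T G0 r s m i \<and>
     local_homeomorphism_map T (subtopology T G0) r \<and>
     local_homeomorphism_map T (subtopology T G0) s \<and>
     continuous_map (subtopology (prod_topology T T) {(g, h). s g = r h}) T (\<lambda>(g, h). m g h) \<and>
     continuous_map T T i"

definition right_G_space :: "'g topology \<Rightarrow> 'g set \<Rightarrow> ('g \<Rightarrow> 'g) \<Rightarrow> ('g \<Rightarrow> 'g)
    \<Rightarrow> ('g \<Rightarrow> 'g \<Rightarrow> 'g) \<Rightarrow> 'a topology \<Rightarrow> ('a \<Rightarrow> 'g) \<Rightarrow> ('a \<Rightarrow> 'g \<Rightarrow> 'a) \<Rightarrow> bool" where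
  "right_G_space T G0 r s m X sA act \<longleftrightarrow>
     continuous_map X (subtopology T G0) sA \<and>
     continuous_map (subtopology (prod_topology X T) {(x, g). sA x = r g}) X (\<lambda>(x, g). act x g) \<and>
     (\<forall>x\<in>topspace X. \<forall>g\<in>topspace T. sA x = r g \<longrightarrow> sA (act x g) = s g) \<and>
     (\<forall>x\<in>topspace X. \<forall>g\<in>topspace T. \<forall>h\<in>topspace T. sA x = r g \<longrightarrow> s g = r h \<longrightarrow>
        act (act x g) h = act x (m g h)) \<and>
     (\<forall>x\<in>topspace X. act x (sA x) = x)"

definition left_G_space :: "'g topology \<Rightarrow> 'g set \<Rightarrow> ('g \<Rightarrow> 'g) \<Rightarrow> ('g \<Rightarrow> 'g)
    \<Rightarrow> ('g \<Rightarrow> 'g \<Rightarrow> 'g) \<Rightarrow> 'b topology \<Rightarrow> ('b \<Rightarrow> 'g) \<Rightarrow> ('g \<Rightarrow> 'b \<Rightarrow> 'b) \<Rightarrow> bool" where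
  "left_G_space T G0 r s m Y rB act \<longleftrightarrow>
     continuous_map Y (subtopology T G0) rB \<and>
     continuous_map (subtopology (prod_topology T Y) {(g, y). s g = rB y}) Y (\<lambda>(g, y). act g y) \<and>
     (\<forall>y\<in>topspace Y. \<forall>g\<in>topspace T. s g = rB y \<longrightarrow> rB (act g y) = r g) \<and>
     (\<forall>y\<in>topspace Y. \<forall>g\<in>topspace T. \<forall>h\<in>topspace T. s h = rB y \<longrightarrow> s g = r h \<longrightarrow>
        act g (act h y) = act (m g h) y) \<and>
     (\<forall>y\<in>topspace Y. act (rB y) y = y)"

definition proper_right_action :: "'g topology \<Rightarrow> ('g \<Rightarrow> 'g)
    \<Rightarrow> 'a topology \<Rightarrow> ('a \<Rightarrow> 'g) \<Rightarrow> ('a \<Rightarrow> 'g \<Rightarrow> 'a) \<Rightarrow> bool" where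
  "proper_right_action T r X sA act \<longleftrightarrow>
     proper_map (subtopology (prod_topology X T) {(a, g). sA a = r g})
                (prod_topology X X) (\<lambda>(a, g). (act a g, a))"

definition fibre_prod_top :: "'a topology \<Rightarrow> ('a \<Rightarrow> 'g) \<Rightarrow> 'b topology \<Rightarrow> ('b \<Rightarrow> 'g)
    \<Rightarrow> ('a \<times> 'b) topology" where
  "fibre_prod_top X sA Y rB = subtopology (prod_topology X Y) {(a, b). sA a = rB b}"

definition diagonal_action :: "('g \<Rightarrow> 'g) \<Rightarrow> ('a \<Rightarrow> 'g \<Rightarrow> 'a) \<Rightarrow> ('g \<Rightarrow> 'b \<Rightarrow> 'b)
    \<Rightarrow> 'g \<Rightarrow> 'a \<times> 'b \<Rightarrow> 'a \<times> 'b" where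
  "diagonal_action i actA actB g w = (actA (fst w) (i g), actB g (snd w))"

definition proper_diagonal_action :: "'g topology \<Rightarrow> ('g \<Rightarrow> 'g) \<Rightarrow> ('g \<Rightarrow> 'g)
    \<Rightarrow> 'a topology \<Rightarrow> ('a \<Rightarrow> 'g) \<Rightarrow> ('a \<Rightarrow> 'g \<Rightarrow> 'a)
    \<Rightarrow> 'b topology \<Rightarrow> ('b \<Rightarrow> 'g) \<Rightarrow> ('g \<Rightarrow> 'b \<Rightarrow> 'b) \<Rightarrow> bool" where
  "proper_diagonal_action T s i X sA actA Y rB actB \<longleftrightarrow>
     proper_map (subtopology (prod_topology T (fibre_prod_top X sA Y rB)) {(g, w). s g = sA (fst w)})
                (prod_topology (fibre_prod_top X sA Y rB) (fibre_prod_top X sA Y rB))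
                (\<lambda>(g, w). (diagonal_action i actA actB g w, w))"

end

theory Submission
  imports Defs
begin

text \<open>The substitution \<open>(g, (a, b)) \<mapsto> ((a g\<inverse>, g), b)\<close> identifies the domain of the diagonal
  action with the fibred product \<open>(A \<times>\<^bsub>G\<^sup>0\<^esub> \<G>) \<times>\<^bsub>G\<^sup>0\<^esub> B\<close>, and in these coordinates the
  map \<open>(g, w) \<mapsto> (g \<cdot> w, w)\<close> becomes \<open>((a, h), b) \<mapsto> ((a, h b), (a h, b))\<close>. Up to a
  permutation of coordinates, this pairs the restriction to a fibred product of the proper map
  \<open>((a, h), b) \<mapsto> ((a h, a), b)\<close> with the continuous map \<open>((a, h), b) \<mapsto> h b\<close> into the
  Hausdorff space \<open>B\<close>, and such a pair is proper.\<close>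

lemma proper_map_eq:
  assumes "proper_map X Y f" "\<And>x. x \<in> topspace X \<Longrightarrow> f x = g x"
  shows "proper_map X Y g"
proof -
  have "{x \<in> topspace X. g x = y} = {x \<in> topspace X. f x = y}" for y
    using assms(2) by auto
  then show ?thesis
    using assms closed_map_eq unfolding proper_map_def by metis
qed

lemma topspace_fibre_prod_top [simp]:
  "topspace (fibre_prod_top X f Y g) = {(x, y). x \<in> topspace X \<and> y \<in> topspace Y \<and> f x = g y}"
  by (auto simp: fibre_prod_top_def)

lemma continuous_map_fibre_prod_top_fst [continuous_intros]:
  "continuous_map (fibre_prod_top X f Y g) X fst"
  by (simp add: fibre_prod_top_def continuous_map_subtopology_fst)

lemma continuous_map_fibre_prod_top_snd [continuous_intros]:
  "continuous_map (fibre_prod_top X f Y g) Y snd"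
  by (simp add: fibre_prod_top_def continuous_map_subtopology_snd)

lemma continuous_map_fibre_prod_top_fst_of:
  "continuous_map Z (fibre_prod_top X f Y g) h \<Longrightarrow> continuous_map Z X (\<lambda>z. fst (h z))"
  using continuous_map_compose[OF _ continuous_map_fibre_prod_top_fst] by (auto simp: o_def)

lemma continuous_map_fibre_prod_top_snd_of:
  "continuous_map Z (fibre_prod_top X f Y g) h \<Longrightarrow> continuous_map Z Y (\<lambda>z. snd (h z))"
  using continuous_map_compose[OF _ continuous_map_fibre_prod_top_snd] by (auto simp: o_def)

lemma continuous_map_into_fibre_prod_top:
  "continuous_map Z (fibre_prod_top X f Y g) (\<lambda>z. (h z, k z)) \<longleftrightarrow>
     continuous_map Z X h \<and> continuous_map Z Y k \<and> (\<forall>z \<in> topspace Z. f (h z) = g (k z))"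
  by (auto simp: fibre_prod_top_def continuous_map_in_subtopology continuous_map_paired)

lemma homeomorphic_map_prod_shuffle:
  "homeomorphic_map (prod_topology (prod_topology (prod_topology X X') Y) Y')
     (prod_topology (prod_topology X' Y') (prod_topology X Y))
     (\<lambda>(((x, x'), y), y'). ((x', y'), (x, y)))"
proof -
  have "homeomorphic_maps (prod_topology (prod_topology (prod_topology X X') Y) Y')
     (prod_topology (prod_topology X' Y') (prod_topology X Y))
     (\<lambda>(((x, x'), y), y'). ((x', y'), (x, y))) (\<lambda>((x', y'), (x, y)). (((x, x'), y), y'))"
    unfolding homeomorphic_maps_def split_def
    by (auto intro!: continuous_map_pairedI)
      (rule continuous_map_fst continuous_map_snd continuous_map_fst_of[unfolded o_def]
        continuous_map_snd_of[unfolded o_def] continuous_map_id[unfolded id_def])+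
  then show ?thesis
    using homeomorphic_map_maps by blast
qed

lemma right_G_space_continuous_map_act:
  assumes "right_G_space T G0 r s m X sA act"
    and "continuous_map Z X f" "continuous_map Z T g" "\<And>z. z \<in> topspace Z \<Longrightarrow> sA (f z) = r (g z)"
  shows "continuous_map Z X (\<lambda>z. act (f z) (g z))"
proof -
  have "continuous_map Z (fibre_prod_top X sA T r) (\<lambda>z. (f z, g z))"
    using assms(2-4) by (simp add: continuous_map_into_fibre_prod_top)
  moreover have "continuous_map (fibre_prod_top X sA T r) X (\<lambda>(x, g). act x g)"
    using assms(1) by (simp add: right_G_space_def fibre_prod_top_def)
  ultimately show ?thesis
    using continuous_map_compose by (fastforce simp: o_def)
qed

lemma left_G_space_continuous_map_act:
  assumes "left_G_space T G0 r s m Y rB act"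
    and "continuous_map Z T g" "continuous_map Z Y f" "\<And>z. z \<in> topspace Z \<Longrightarrow> s (g z) = rB (f z)"
  shows "continuous_map Z Y (\<lambda>z. act (g z) (f z))"
proof -
  have "continuous_map Z (fibre_prod_top T s Y rB) (\<lambda>z. (g z, f z))"
    using assms(2-4) by (simp add: continuous_map_into_fibre_prod_top)
  moreover have "continuous_map (fibre_prod_top T s Y rB) Y (\<lambda>(g, y). act g y)"
    using assms(1) by (simp add: left_G_space_def fibre_prod_top_def)
  ultimately show ?thesis
    using continuous_map_compose by (fastforce simp: o_def)
qed

lemma groupoid_inverse:
  assumes "groupoid T G0 r s m i" "g \<in> topspace T"
  shows "i g \<in> topspace T" "r (i g) = s g" "s (i g) = r g" "m g (i g) = r g" "m (i g) g = s g"
  using assms unfolding groupoid_def by auto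

lemma right_G_space_anchor_act:
  assumes "right_G_space T G0 r s m X sA act" "x \<in> topspace X" "g \<in> topspace T" "sA x = r g"
  shows "sA (act x g) = s g"
  using assms unfolding right_G_space_def by auto

lemma left_G_space_anchor_act:
  assumes "left_G_space T G0 r s m Y rB act" "y \<in> topspace Y" "g \<in> topspace T" "s g = rB y"
  shows "rB (act g y) = r g"
  using assms unfolding left_G_space_def by auto

lemma right_G_space_act_act_inverse:
  assumes G: "groupoid T G0 r s m i" and X: "right_G_space T G0 r s m X sA act"
    and "x \<in> topspace X" "g \<in> topspace T" "sA x = r g"
  shows "act (act x g) (i g) = x"
  using groupoid_inverse[OF G \<open>g \<in> topspace T\<close>] X assms(3-5)
  unfolding right_G_space_def by metis

lemma right_G_space_act_inverse_act:
  assumes G: "groupoid T G0 r s m i" and X: "right_G_space T G0 r s m X sA act"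
    and "x \<in> topspace X" "g \<in> topspace T" "sA x = s g"
  shows "act (act x (i g)) g = x"
  using groupoid_inverse[OF G \<open>g \<in> topspace T\<close>] X assms(3-5)
  unfolding right_G_space_def by metis

lemma homeomorphic_map_diagonal_domain:
  assumes G: "groupoid T G0 r s m i" and i: "continuous_map T T i"
    and X: "right_G_space T G0 r s m X sA act"
  shows "homeomorphic_map (fibre_prod_top T s (fibre_prod_top X sA Y rB) (\<lambda>w. sA (fst w)))
           (fibre_prod_top (fibre_prod_top X sA T r) (\<lambda>p. s (snd p)) Y rB)
           (\<lambda>(g, a, b). ((act a (i g), g), b))"
    (is "homeomorphic_map ?D ?E ?k")
proof -
  note simps = continuous_map_into_fibre_prod_top groupoid_inverse[OF G]
    right_G_space_anchor_act[OF X]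
  note intros = continuous_intros continuous_map_fibre_prod_top_fst_of
    continuous_map_fibre_prod_top_snd_of right_G_space_continuous_map_act[OF X]
  have "continuous_map ?D ?E (\<lambda>x. ((act (fst (snd x)) (i (fst x)), fst x), snd (snd x)))"
    by (auto simp: simps intro!: intros continuous_map_compose[OF _ i, unfolded o_def])
  moreover have "continuous_map ?E ?D (\<lambda>y. (snd (fst y), act (fst (fst y)) (snd (fst y)), snd y))"
    by (auto simp: simps intro!: intros)
  ultimately have "homeomorphic_maps ?D ?E ?k (\<lambda>((a, h), b). (h, act a h, b))"
    unfolding homeomorphic_maps_def
    by (auto simp: split_def right_G_space_act_act_inverse[OF G X]
        right_G_space_act_inverse_act[OF G X])
  then show ?thesis
    using homeomorphic_map_maps by blast
qed

lemma proper_map_right_action_fibre_prod: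
  assumes X: "right_G_space T G0 r s m X sA act" and "proper_right_action T r X sA act"
  shows "proper_map (fibre_prod_top (fibre_prod_top X sA T r) (\<lambda>p. s (snd p)) Y rB)
           (subtopology (prod_topology (prod_topology X X) Y) {((x, a), b). sA x = rB b})
           (\<lambda>((a, h), b). ((act a h, a), b))"
proof -
  let ?P = "fibre_prod_top X sA T r"
  let ?\<alpha> = "\<lambda>(a, h). (act a h, a)"
  have "proper_map ?P (prod_topology X X) ?\<alpha>"
    using assms(2) by (simp add: proper_right_action_def fibre_prod_top_def)
  then have "proper_map (prod_topology ?P Y) (prod_topology (prod_topology X X) Y)
      (\<lambda>(p, b). (?\<alpha> p, b))"
    by (simp add: proper_map_prod proper_map_id[unfolded id_def])
  moreover have "{x \<in> topspace (prod_topology ?P Y).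
        (\<lambda>(p, b). (?\<alpha> p, b)) x \<in> {((x, a), b). sA x = rB b}}
      = topspace (prod_topology ?P Y) \<inter> {(p, b). s (snd p) = rB b}"
    by (auto simp: right_G_space_anchor_act[OF X])
  ultimately have "proper_map (subtopology (prod_topology ?P Y)
        (topspace (prod_topology ?P Y) \<inter> {(p, b). s (snd p) = rB b}))
      (subtopology (prod_topology (prod_topology X X) Y) {((x, a), b). sA x = rB b})
      (\<lambda>(p, b). (?\<alpha> p, b))"
    by (rule proper_map_restriction)
  then show ?thesis
    unfolding subtopology_restrict by (simp add: fibre_prod_top_def split_def)
qed

lemma proper_map_reparametrised_diagonal_action:
  fixes X :: "'a topology" and Y :: "'b topology"
  assumes X: "right_G_space T G0 r s m X sA actA" and Y: "left_G_space T G0 r s m Y rB actB"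
    and "proper_right_action T r X sA actA" and "Hausdorff_space Y"
  shows "proper_map (fibre_prod_top (fibre_prod_top X sA T r) (\<lambda>p. s (snd p)) Y rB)
           (prod_topology (fibre_prod_top X sA Y rB) (fibre_prod_top X sA Y rB))
           (\<lambda>((a, h), b). ((a, actB h b), (actA a h, b)))"
proof -
  define E where "E = fibre_prod_top (fibre_prod_top X sA T r) (\<lambda>p. s (snd p)) Y rB"
  define Z where "Z = prod_topology (prod_topology X X) Y"
  define V :: "(('a \<times> 'a) \<times> 'b) set" where "V = {((x, a), b). sA x = rB b}"
  define U where "U = {(((x, a), b), y). sA x = rB b \<and> sA a = rB y}"
  define shuffle :: "((('a \<times> 'a) \<times> 'b) \<times> 'b) \<Rightarrow> ('a \<times> 'b) \<times> ('a \<times> 'b)"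
    where "shuffle = (\<lambda>(((x, a), b), y). ((a, y), (x, b)))"
  have F: "proper_map E (subtopology Z V) (\<lambda>((a, h), b). ((actA a h, a), b))"
    unfolding E_def Z_def V_def by (rule proper_map_right_action_fibre_prod[OF X assms(3)])
  have G: "continuous_map E Y (\<lambda>((a, h), b). actB h b)"
    unfolding E_def split_def
    by (rule left_G_space_continuous_map_act[OF Y])
      (auto intro: continuous_intros continuous_map_fibre_prod_top_snd_of)
  have "proper_map E (prod_topology (subtopology Z V) Y)
      (\<lambda>((a, h), b). (((actA a h, a), b), actB h b))"
    using proper_map_paired[of E "subtopology Z V" _ Y] F G \<open>Hausdorff_space Y\<close>
    by (simp add: split_def)
  moreover have "(\<lambda>((a, h), b). (((actA a h, a), b), actB h b)) \<in> topspace E \<rightarrow> U"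
    by (auto simp: E_def U_def right_G_space_anchor_act[OF X] left_G_space_anchor_act[OF Y])
  ultimately have "proper_map E (subtopology (prod_topology Z Y) ((V \<times> topspace Y) \<inter> U))
      (\<lambda>((a, h), b). (((actA a h, a), b), actB h b))"
    using proper_map_into_subtopology
    by (fastforce simp: prod_topology_subtopology subtopology_subtopology split_def)
  moreover have "proper_map (subtopology (prod_topology Z Y) ((V \<times> topspace Y) \<inter> U))
      (prod_topology (fibre_prod_top X sA Y rB) (fibre_prod_top X sA Y rB)) shuffle"
  proof -
    have R: "proper_map (prod_topology Z Y)
        (prod_topology (prod_topology X Y) (prod_topology X Y)) shuffle"
      unfolding Z_def shuffle_def
      by (rule homeomorphic_imp_proper_map[OF homeomorphic_map_prod_shuffle])
    have preimage: "{z \<in> topspace (prod_topology Z Y).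
          shuffle z \<in> {(a, b). sA a = rB b} \<times> {(a, b). sA a = rB b}}
        = topspace (prod_topology Z Y) \<inter> ((V \<times> topspace Y) \<inter> U)"
      by (auto simp: Z_def V_def U_def shuffle_def)
    show ?thesis
      using proper_map_restriction[OF R preimage] unfolding fibre_prod_top_def
      by (simp only: subtopology_restrict subtopology_Times)
  qed
  ultimately show ?thesis
    unfolding E_def
    by (rule proper_map_eq[OF proper_map_compose]) (auto simp: shuffle_def)
qed

theorem lemma5p2:
  fixes T :: "'g topology" and G0 :: "'g set"
    and r s i :: "'g \<Rightarrow> 'g" and m :: "'g \<Rightarrow> 'g \<Rightarrow> 'g"
    and X :: "'a topology" and sA :: "'a \<Rightarrow> 'g" and actA :: "'a \<Rightarrow> 'g \<Rightarrow> 'a"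
    and Y :: "'b topology" and rB :: "'b \<Rightarrow> 'g" and actB :: "'g \<Rightarrow> 'b \<Rightarrow> 'b"
  assumes "etale_groupoid T G0 r s m i"
    and "right_G_space T G0 r s m X sA actA"
    and "left_G_space T G0 r s m Y rB actB"
    and "proper_right_action T r X sA actA"
    and "Hausdorff_space Y"
  shows "proper_diagonal_action T s i X sA actA Y rB actB"
proof -
  let ?W = "fibre_prod_top X sA Y rB"
  have G: "groupoid T G0 r s m i" and i: "continuous_map T T i"
    using assms(1) unfolding etale_groupoid_def by auto
  have "proper_map (fibre_prod_top T s ?W (\<lambda>w. sA (fst w))) (prod_topology ?W ?W)
      ((\<lambda>((a, h), b). ((a, actB h b), (actA a h, b))) \<circ> (\<lambda>(g, a, b). ((actA a (i g), g), b)))"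
    using proper_map_compose[OF
        homeomorphic_imp_proper_map[OF homeomorphic_map_diagonal_domain[OF G i assms(2)]]
        proper_map_reparametrised_diagonal_action[OF assms(2-5)]] .
  moreover have "fibre_prod_top T s ?W (\<lambda>w. sA (fst w))
      = subtopology (prod_topology T ?W) {(g, w). s g = sA (fst w)}"
    by (simp add: fibre_prod_top_def)
  ultimately show ?thesis
    unfolding proper_diagonal_action_def
    by (auto elim!: proper_map_eq
        simp: diagonal_action_def right_G_space_act_inverse_act[OF G assms(2)])
qed

end
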